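(* Let $\mathbb{H}$ be a real Hilbert space, $T\in\mathbb{B}(\mathbb{H})$ with $T\neq 0$, and fix $\epsilon\in[0,1)$. (i) The following are equivalent: (1) for every $A\in\mathbb{B}(\mathbb{H})$: $T\perp_B^{\epsilon}A$ if and only if there exists $x\in M_T$ with $|\langle Tx,Ax\rangle|\le\epsilon\|T\|\|A\|$; (2) $M_T=S_{H_0}$ for some finite dimensional subspace $H_0$ of $\mathbb{H}$, and the restriction of $T$ to $H_0^{\perp}$ satisfies $\|T|_{H_0^\perp}\|<\|T\|$. (ii) If (2) holds, then for every $A\in\mathbb{B}(\mathbb{H})$ with $M_T\subseteq M_A$: $T\perp_B^{\epsilon}A$ if and only if there exists $x\in M_T$ with $Tx\perp^{\epsilon}Ax$.
   Context: $\mathbb{B}(\mathbb{H})$ is the space of bounded linear operators on $\mathbb{H}$ with the operator norm. $S_{H_0}$ is the unit sphere of $H_0$; $M_T=\{x\in S_{\mathbb{H}}:\|Tx\|=\|T\|\}$. For $\epsilon\in[0,1)$ and $u,v$ in a normed space, $u\perp_B^{\epsilon}v$ means $\|u+\lambda v\|^2\ge\|u\|^2-2\epsilon\|u\|\|\lambda v\|$ for all $\lambda\in\mathbb{R}$ (applied here to operators with the operator norm). In an inner product space, $x\perp^{\epsilon}y$ means $|\langle x,y\rangle|\le\epsilon\|x\|\|y\|$. *)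

theory Defs
  imports "HOL-Analysis.Analysis"
begin

definition norm_attain :: "('a::real_normed_vector \<Rightarrow>\<^sub>L 'b::real_normed_vector) \<Rightarrow> 'a set" where
  "norm_attain T = {x. norm x = 1 \<and> norm (blinfun_apply T x) = norm T}"

definition bj_eps_orth :: "real \<Rightarrow> 'a::real_normed_vector \<Rightarrow> 'a \<Rightarrow> bool" where
  "bj_eps_orth eps u v \<longleftrightarrow>
     (\<forall>l::real. (norm (u + l *\<^sub>R v))\<^sup>2 \<ge> (norm u)\<^sup>2 - 2 * eps * norm u * norm (l *\<^sub>R v))"

definition inner_eps_orth :: "real \<Rightarrow> 'a::real_inner \<Rightarrow> 'a \<Rightarrow> bool" where
  "inner_eps_orth eps x y \<longleftrightarrow> \<bar>inner x y\<bar> \<le> eps * norm x * norm y"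

definition unit_sphere_of :: "'a::real_normed_vector set \<Rightarrow> 'a set" where
  "unit_sphere_of H0 = {x \<in> H0. norm x = 1}"

definition restr_norm :: "('a::real_normed_vector \<Rightarrow>\<^sub>L 'b::real_normed_vector) \<Rightarrow> 'a set \<Rightarrow> real" where
  "restr_norm T K = Sup ((\<lambda>x. norm (blinfun_apply T x)) ` {x \<in> K. norm x \<le> 1})"

definition fin_dim_subspace :: "'a::real_vector set \<Rightarrow> bool" where
  "fin_dim_subspace H0 \<longleftrightarrow> subspace H0 \<and> (\<exists>B. finite B \<and> H0 = span B)"

end

theory Submission
  imports Defs
begin

(*
  A unit vector x maximises ||T.|| on the sphere exactly when <Tx, Ty> = ||T||^2 <x, y> for
  all y, so M_T is the unit sphere of the eigenspace E of T*T for ||T||^2.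

  If E is finite dimensional and ||T|| is strictly smaller on the orthogonal complement of E,
  suppose |<Tx, Ax>| > eps ||T|| ||A|| on M_T. By the intermediate value theorem the quadratic
  form <Tx, Ax> has constant sign on the sphere of E, say positive, and by compactness it
  exceeds some m > eps ||T|| ||A|| there. Splitting a unit vector into its components in E and
  in its complement gives ||T - l A||^2 <= ||T||^2 - l m - l eps ||T|| ||A|| for a small l > 0,
  so T is not eps-orthogonal to A.

  Conversely, if E is finite dimensional but T restricted to its complement still has norm
  ||T||, then A = T P_E violates (1): T + l A agrees with T on the complement, and
  <Tx, Ax> = ||T||^2 on M_T. If E is infinite dimensional, take an orthonormal sequence e_n in
  E and A = T (I - D), where D multiplies the e_n-coordinate by weights w_n increasing from 0
  to 1 - eps. Then A e_n = (1 - w_n) T e_n forces ||T + l A|| >= |1 + l eps| ||T||, while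
  Bessel's inequality gives <Tx, Ax> > eps ||T||^2 = eps ||T|| ||A|| on M_T.

  Part (ii) is (i) once ||Ax|| = ||A|| on M_T.
*)

lemma power2_norm_add_scaleR:
  fixes u v :: "'a::real_inner"
  shows "(norm (u + t *\<^sub>R v))\<^sup>2 = (norm u)\<^sup>2 + 2 * t * inner u v + t\<^sup>2 * (norm v)\<^sup>2"
  unfolding power2_norm_eq_inner
  by (simp add: inner_add_left inner_add_right inner_commute algebra_simps power2_eq_square)

lemma subspace_subset_if_unit_sphere_subset:
  fixes H E :: "'a::real_normed_vector set"
  assumes "subspace H" "subspace E" "unit_sphere_of H \<subseteq> unit_sphere_of E"
  shows "H \<subseteq> E"
proof
  fix x assume x: "x \<in> H"
  show "x \<in> E"
  proof (cases "x = 0")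
    case True
    then show ?thesis using assms(2) subspace_0 by blast
  next
    case False
    then have "x /\<^sub>R norm x \<in> unit_sphere_of H"
      using assms(1) x by (simp add: unit_sphere_of_def subspace_scale)
    then have "x /\<^sub>R norm x \<in> unit_sphere_of E"
      using assms(3) by blast
    then have "norm x *\<^sub>R (x /\<^sub>R norm x) \<in> E"
      unfolding unit_sphere_of_def by (blast intro: subspace_scale[OF assms(2)])
    then show ?thesis using False by simp
  qed
qed

lemma exists_unit_vector_if_blinfun_nonzero:
  fixes T :: "'a::real_normed_vector \<Rightarrow>\<^sub>L 'b::real_normed_vector"
  assumes "T \<noteq> 0"
  obtains u :: 'a where "norm u = 1"
proof -
  obtain x where "T x \<noteq> 0" using assms blinfun_eqI[of T 0] by auto
  then have "x \<noteq> 0" by auto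
  then show thesis using that[of "x /\<^sub>R norm x"] by simp
qed

lemma power2_norm_blinfun_le:
  fixes S :: "'a::real_normed_vector \<Rightarrow>\<^sub>L 'b::real_normed_vector"
  assumes unit: "norm (u :: 'a) = 1" and bound: "\<And>z. norm z = 1 \<Longrightarrow> (norm (S z))\<^sup>2 \<le> K"
  shows "(norm S)\<^sup>2 \<le> K"
proof -
  have K: "0 \<le> K" using bound[OF unit] zero_le_power2[of "norm (S u)"] by linarith
  have "norm S \<le> sqrt K"
  proof (rule norm_blinfun_bound)
    fix z
    show "norm (S z) \<le> sqrt K * norm z"
    proof (cases "z = 0")
      case False
      then have "norm (S (z /\<^sub>R norm z)) \<le> sqrt K"
        using bound real_le_rsqrt by simp
      then show ?thesis
        using False by (simp add: blinfun.scaleR_right field_simps)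
    qed simp
  qed (use K in simp)
  then show ?thesis by (metis K norm_ge_zero power_mono real_sqrt_pow2)
qed

lemma bdd_above_restr_norm:
  fixes T :: "'a::real_normed_vector \<Rightarrow>\<^sub>L 'b::real_normed_vector"
  shows "bdd_above ((\<lambda>x. norm (T x)) ` {x \<in> K. norm x \<le> 1})"
proof (rule bdd_aboveI2)
  fix x assume "x \<in> {x \<in> K. norm x \<le> 1}"
  then show "norm (T x) \<le> norm T"
    by (smt (verit) mem_Collect_eq mult_left_le norm_blinfun norm_ge_zero)
qed

lemma restr_norm_nonneg:
  fixes T :: "'a::real_normed_vector \<Rightarrow>\<^sub>L 'b::real_normed_vector"
  assumes "subspace K"
  shows "0 \<le> restr_norm T K"
proof -
  have "norm (T 0) \<le> restr_norm T K"
    unfolding restr_norm_def using assms subspace_0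
    by (intro cSup_upper bdd_above_restr_norm imageI) auto
  then show ?thesis by simp
qed

lemma norm_apply_le_restr_norm:
  fixes T :: "'a::real_normed_vector \<Rightarrow>\<^sub>L 'b::real_normed_vector"
  assumes "subspace K" "x \<in> K"
  shows "norm (T x) \<le> restr_norm T K * norm x"
proof (cases "x = 0")
  case False
  have "x /\<^sub>R norm x \<in> {x \<in> K. norm x \<le> 1}"
    using assms False by (auto simp: subspace_scale)
  then have "norm (T (x /\<^sub>R norm x)) \<le> restr_norm T K"
    unfolding restr_norm_def by (intro cSup_upper bdd_above_restr_norm imageI)
  then show ?thesis
    using False by (simp add: blinfun.scaleR_right field_simps)
qed simp

lemma restr_norm_le_norm_if_eq_on:
  fixes S T :: "'a::real_normed_vector \<Rightarrow>\<^sub>L 'b::real_normed_vector"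
  assumes "subspace K" "\<And>y. y \<in> K \<Longrightarrow> S y = T y"
  shows "restr_norm T K \<le> norm S"
  unfolding restr_norm_def
proof (rule cSup_least)
  show "(\<lambda>x. norm (T x)) ` {x \<in> K. norm x \<le> 1} \<noteq> {}"
    using assms(1) subspace_0 by fastforce
next
  fix v assume "v \<in> (\<lambda>x. norm (T x)) ` {x \<in> K. norm x \<le> 1}"
  then obtain y where "y \<in> K" "norm y \<le> 1" "v = norm (S y)"
    using assms(2) by auto
  then show "v \<le> norm S"
    by (smt (verit) mult_left_le norm_blinfun norm_ge_zero)
qed

section \<open>Vectors at which an operator attains its norm\<close>

text \<open>The eigenspace of \<open>T\<^sup>* T\<close> for the eigenvalue \<open>norm T\<^sup>2\<close>, written without adjoints.\<close>

definition max_eigenspace :: "('a::real_inner \<Rightarrow>\<^sub>L 'b::real_inner) \<Rightarrow> 'a set" where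
  "max_eigenspace T = {x. \<forall>y. inner (T x) (T y) = (norm T)\<^sup>2 * inner x y}"

lemma inner_apply_norm_attain:
  fixes T :: "'a::real_inner \<Rightarrow>\<^sub>L 'b::real_inner"
  assumes "x \<in> norm_attain T"
  shows "inner (T x) (T y) = (norm T)\<^sup>2 * inner x y"
proof -
  have nx: "norm x = 1" and nT: "norm (T x) = norm T"
    using assms by (auto simp: norm_attain_def)
  define a where "a = inner (T x) (T y) - (norm T)\<^sup>2 * inner x y"
  define b where "b = (norm (T y))\<^sup>2 - (norm T)\<^sup>2 * (norm y)\<^sup>2"
  have quadratic: "2 * t * a + t\<^sup>2 * b \<le> 0" for t
  proof -
    have "(norm (T (x + t *\<^sub>R y)))\<^sup>2 \<le> (norm T * norm (x + t *\<^sub>R y))\<^sup>2"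
      by (simp add: norm_blinfun power_mono)
    moreover have "(norm (T (x + t *\<^sub>R y)))\<^sup>2
        = (norm T)\<^sup>2 + 2 * t * inner (T x) (T y) + t\<^sup>2 * (norm (T y))\<^sup>2"
      using nT by (simp add: blinfun.add_right blinfun.scaleR_right power2_norm_add_scaleR)
    moreover have "(norm (x + t *\<^sub>R y))\<^sup>2 = 1 + 2 * t * inner x y + t\<^sup>2 * (norm y)\<^sup>2"
      using nx by (simp add: power2_norm_add_scaleR)
    ultimately show ?thesis by (simp add: a_def b_def algebra_simps power_mult_distrib)
  qed
  have "a = 0"
  proof (rule ccontr)
    assume "a \<noteq> 0"
    define B where "B = \<bar>b\<bar> + 1"
    have "B > 0" "b / B > -1" by (simp_all add: B_def field_simps)
    then have "0 < a\<^sup>2 / B * (2 + b / B)"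
      using \<open>a \<noteq> 0\<close> by (intro mult_pos_pos) simp_all
    also have "\<dots> = 2 * (a / B) * a + (a / B)\<^sup>2 * b"
      using \<open>B > 0\<close> by (simp add: field_simps power2_eq_square)
    finally show False using quadratic[of "a / B"] by simp
  qed
  then show ?thesis by (simp add: a_def)
qed

lemma subspace_max_eigenspace: "subspace (max_eigenspace T)"
  unfolding subspace_def max_eigenspace_def
  by (auto simp: blinfun.add_right blinfun.scaleR_right inner_add_left algebra_simps)

lemma norm_apply_max_eigenspace:
  assumes "x \<in> max_eigenspace T"
  shows "norm (T x) = norm T * norm x"
proof -
  have "(norm (T x))\<^sup>2 = (norm T * norm x)\<^sup>2"
    using assms by (simp add: max_eigenspace_def power2_norm_eq_inner power_mult_distrib)
  then show ?thesis by (simp add: power2_eq_iff_nonneg)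
qed

lemma norm_attain_eq_unit_sphere_max_eigenspace:
  "norm_attain T = unit_sphere_of (max_eigenspace T)"
proof
  show "norm_attain T \<subseteq> unit_sphere_of (max_eigenspace T)"
    using inner_apply_norm_attain
    by (fastforce simp: unit_sphere_of_def max_eigenspace_def norm_attain_def)
  show "unit_sphere_of (max_eigenspace T) \<subseteq> norm_attain T"
    using norm_apply_max_eigenspace by (fastforce simp: unit_sphere_of_def norm_attain_def)
qed

lemma subspace_subset_max_eigenspace:
  assumes "subspace H" "norm_attain T = unit_sphere_of H"
  shows "H \<subseteq> max_eigenspace T"
proof (rule subspace_subset_if_unit_sphere_subset[OF assms(1) subspace_max_eigenspace])
  show "unit_sphere_of H \<subseteq> unit_sphere_of (max_eigenspace T)"
    using assms(2) norm_attain_eq_unit_sphere_max_eigenspace by blast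
qed

section \<open>Finite orthonormal sets\<close>

definition orthonormal :: "'a::real_inner set \<Rightarrow> bool" where
  "orthonormal F \<longleftrightarrow>
     (\<forall>f\<in>F. norm f = 1) \<and> (\<forall>f\<in>F. \<forall>g\<in>F. f \<noteq> g \<longrightarrow> inner f g = 0)"

lemma orthonormal_basis_of_span:
  fixes B :: "'a::real_inner set"
  assumes "finite B"
  obtains F where "finite F" "orthonormal F" "span F = span B"
proof -
  obtain C where C: "finite C" "span C = span B" "pairwise orthogonal C"
    using basis_orthogonal[OF assms] by blast
  define F where "F = (\<lambda>x. x /\<^sub>R norm x) ` (C - {0})"
  have "orthonormal F"
    using C(3) by (auto simp: orthonormal_def F_def pairwise_def orthogonal_def)
  moreover have "span F = span C"
  proof -
    have "c \<in> span F" if "c \<in> C" for c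
    proof (cases "c = 0")
      case False
      then have "norm c *\<^sub>R (c /\<^sub>R norm c) \<in> span F"
        using that by (intro span_mul span_base) (auto simp: F_def)
      then show ?thesis using False by simp
    qed (simp add: span_zero)
    then show ?thesis
      unfolding span_eq F_def by (auto intro: span_mul span_base)
  qed
  moreover have "finite F" using C(1) by (simp add: F_def)
  ultimately show thesis using that C(2) by simp
qed

lemma fin_dim_subspace_orthonormal_basis:
  assumes "fin_dim_subspace H"
  obtains F where "finite F" "orthonormal F" "H = span F"
  using assms orthonormal_basis_of_span by (metis fin_dim_subspace_def)

definition orth_proj :: "'a::real_inner set \<Rightarrow> 'a \<Rightarrow> 'a" where
  "orth_proj F x = (\<Sum>f\<in>F. inner f x *\<^sub>R f)"

lemma orth_proj_in_span: "orth_proj F x \<in> span F"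
  unfolding orth_proj_def by (intro span_sum span_mul span_base)

lemma inner_orth_proj:
  assumes "finite F" "orthonormal F" "g \<in> F"
  shows "inner g (orth_proj F x) = inner g x"
proof -
  have "inner g (orth_proj F x) = (\<Sum>f\<in>F. if f = g then inner g x else 0)"
    unfolding orth_proj_def inner_sum_right
    using assms(2,3) by (intro sum.cong)
      (auto simp: orthonormal_def inner_commute power2_norm_eq_inner[symmetric])
  then show ?thesis using assms(1,3) by simp
qed

lemma inner_diff_orth_proj_span:
  assumes "finite F" "orthonormal F" "y \<in> span F"
  shows "inner (x - orth_proj F x) y = 0"
proof (rule span_induct[OF assms(3)])
  show "subspace {y. inner (x - orth_proj F x) y = 0}"
    by (auto simp: subspace_def inner_add_right)
next
  fix g assume "g \<in> F"
  then have "inner g (x - orth_proj F x) = 0"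
    using inner_orth_proj[OF assms(1,2)] by (simp add: inner_diff_right)
  then show "inner (x - orth_proj F x) g = 0" by (simp add: inner_commute)
qed

lemma orth_proj_id:
  assumes "finite F" "orthonormal F" "x \<in> span F"
  shows "orth_proj F x = x"
proof -
  have "x - orth_proj F x \<in> span F"
    using assms(3) orth_proj_in_span span_diff by blast
  then have "inner (x - orth_proj F x) (x - orth_proj F x) = 0"
    using inner_diff_orth_proj_span[OF assms(1,2)] by blast
  then show ?thesis by simp
qed

lemma diff_orth_proj_in_orthogonal_comp:
  assumes "finite F" "orthonormal F"
  shows "x - orth_proj F x \<in> orthogonal_comp (span F)"
  using inner_diff_orth_proj_span[OF assms]
  by (auto simp: orthogonal_comp_def orthogonal_def inner_commute)

lemma orth_proj_orthogonal_comp: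
  assumes "y \<in> orthogonal_comp (span F)"
  shows "orth_proj F y = 0"
  using assms by (auto simp: orth_proj_def orthogonal_comp_def orthogonal_def intro!: sum.neutral span_base)

lemma norm_orth_proj_le:
  assumes "finite F" "orthonormal F"
  shows "norm (orth_proj F x) \<le> norm x"
proof -
  have "orthogonal (orth_proj F x) (x - orth_proj F x)"
    using inner_diff_orth_proj_span[OF assms orth_proj_in_span]
    by (simp add: orthogonal_def inner_commute)
  then have "(norm x)\<^sup>2 = (norm (orth_proj F x))\<^sup>2 + (norm (x - orth_proj F x))\<^sup>2"
    using norm_add_Pythagorean by fastforce
  then show ?thesis by (smt (verit) power2_le_imp_le norm_ge_zero zero_le_power2)
qed

lemma bounded_linear_orth_proj:
  assumes "finite F" "orthonormal F"
  shows "bounded_linear (orth_proj F)"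
proof (rule bounded_linear_intro[where K = 1])
  show "orth_proj F (x + y) = orth_proj F x + orth_proj F y" for x y
    by (simp add: orth_proj_def inner_add_right scaleR_add_left sum.distrib)
  show "orth_proj F (r *\<^sub>R x) = r *\<^sub>R orth_proj F x" for r x
    by (simp add: orth_proj_def scaleR_sum_right)
qed (simp add: norm_orth_proj_le[OF assms])

lemma compact_coefficient_box:
  fixes F :: "'a::real_normed_vector set"
  assumes "finite F"
  shows "compact {(\<Sum>f\<in>F. c f *\<^sub>R f) | c. \<forall>f\<in>F. c f \<in> {-1..1}}"
  using assms
proof (induction F rule: finite_induct)
  case (insert a F)
  let ?Box = "\<lambda>F. {(\<Sum>f\<in>F. c f *\<^sub>R f) | c. \<forall>f\<in>F. c f \<in> {-1..1}}"
  have "?Box (insert a F) = (\<lambda>(t, s). t *\<^sub>R a + s) ` ({-1..1} \<times> ?Box F)"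
  proof (intro set_eqI iffI)
    fix x assume "x \<in> ?Box (insert a F)"
    then obtain c where "\<forall>f\<in>insert a F. c f \<in> {-1..1}" "x = c a *\<^sub>R a + (\<Sum>f\<in>F. c f *\<^sub>R f)"
      using insert.hyps by auto
    then show "x \<in> (\<lambda>(t, s). t *\<^sub>R a + s) ` ({-1..1} \<times> ?Box F)" by force
  next
    fix x assume "x \<in> (\<lambda>(t, s). t *\<^sub>R a + s) ` ({-1..1} \<times> ?Box F)"
    then obtain t c where tc: "t \<in> {-1..1}" "\<forall>f\<in>F. c f \<in> {-1..1}"
      "x = t *\<^sub>R a + (\<Sum>f\<in>F. c f *\<^sub>R f)" by auto
    have "(\<Sum>f\<in>F. (c(a := t)) f *\<^sub>R f) = (\<Sum>f\<in>F. c f *\<^sub>R f)"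
      using insert.hyps by (intro sum.cong) auto
    then have "x = (\<Sum>f\<in>insert a F. (c(a := t)) f *\<^sub>R f)"
      using insert.hyps tc by simp
    moreover have "\<forall>f\<in>insert a F. (c(a := t)) f \<in> {-1..1}" using tc by auto
    ultimately show "x \<in> ?Box (insert a F)" by blast
  qed
  moreover have "compact ((\<lambda>(t, s). t *\<^sub>R a + s) ` ({-1..1} \<times> ?Box F))"
    by (intro compact_continuous_image compact_Times compact_Icc insert.IH)
      (auto intro!: continuous_intros simp: case_prod_beta)
  ultimately show ?case by simp
qed simp

lemma compact_unit_sphere_span:
  assumes "finite F" "orthonormal F"
  shows "compact (unit_sphere_of (span F))"
proof -
  let ?Box = "{(\<Sum>f\<in>F. c f *\<^sub>R f) | c. \<forall>f\<in>F. c f \<in> {-1..1}}"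
  have "unit_sphere_of (span F) = ?Box \<inter> {x. norm x = 1}"
  proof (intro set_eqI iffI)
    fix x assume x: "x \<in> unit_sphere_of (span F)"
    have "\<bar>inner f x\<bar> \<le> 1" if "f \<in> F" for f
      using Cauchy_Schwarz_ineq2[of f x] x that assms(2)
      by (simp add: unit_sphere_of_def orthonormal_def)
    moreover have "x = orth_proj F x"
      using orth_proj_id[OF assms] x by (simp add: unit_sphere_of_def)
    ultimately show "x \<in> ?Box \<inter> {x. norm x = 1}"
      using x unfolding orth_proj_def unit_sphere_of_def by (auto simp: abs_le_iff)
  next
    fix x assume "x \<in> ?Box \<inter> {x. norm x = 1}"
    then show "x \<in> unit_sphere_of (span F)"
      by (auto simp: unit_sphere_of_def intro: span_sum span_mul span_base)
  qed
  moreover have "compact (?Box \<inter> {x. norm x = 1})"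
    by (intro compact_Int_closed compact_coefficient_box assms(1) closed_Collect_eq continuous_intros)
  ultimately show ?thesis by simp
qed

section \<open>Condition (2) implies condition (1)\<close>

text \<open>\<open>attain_eps_orth eps T A\<close> is the right-hand side of the equivalence in condition (1),
  \<open>finitely_norm_attaining T\<close> is condition (2).\<close>

definition attain_eps_orth :: "real \<Rightarrow> ('a::real_inner \<Rightarrow>\<^sub>L 'b::real_inner) \<Rightarrow> ('a \<Rightarrow>\<^sub>L 'b) \<Rightarrow> bool" where
  "attain_eps_orth eps T A \<longleftrightarrow>
     (\<exists>x\<in>norm_attain T. \<bar>inner (T x) (A x)\<bar> \<le> eps * norm T * norm A)"

definition finitely_norm_attaining :: "('a::real_inner \<Rightarrow>\<^sub>L 'b::real_normed_vector) \<Rightarrow> bool" where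
  "finitely_norm_attaining T \<longleftrightarrow>
     (\<exists>H0. fin_dim_subspace H0 \<and> norm_attain T = unit_sphere_of H0 \<and>
           restr_norm T (orthogonal_comp H0) < norm T)"

lemma bj_eps_orth_uminus:
  assumes "bj_eps_orth eps u v"
  shows "bj_eps_orth eps u (- v)"
  unfolding bj_eps_orth_def
proof
  fix l :: real
  show "(norm u)\<^sup>2 - 2 * eps * norm u * norm (l *\<^sub>R - v) \<le> (norm (u + l *\<^sub>R - v))\<^sup>2"
    using assms[unfolded bj_eps_orth_def, rule_format, of "- l"] by simp
qed

lemma bj_eps_orth_if_norm_le:
  assumes "0 \<le> eps" "\<And>l. norm u \<le> norm (u + l *\<^sub>R v)"
  shows "bj_eps_orth eps u v"
  unfolding bj_eps_orth_def
proof
  fix l :: real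
  have "(norm u)\<^sup>2 \<le> (norm (u + l *\<^sub>R v))\<^sup>2"
    using assms(2) by (simp add: power_mono)
  moreover have "0 \<le> 2 * eps * norm u * norm (l *\<^sub>R v)"
    using assms(1) by simp
  ultimately show "(norm u)\<^sup>2 - 2 * eps * norm u * norm (l *\<^sub>R v) \<le> (norm (u + l *\<^sub>R v))\<^sup>2"
    by linarith
qed

lemma bj_eps_orth_if_attain_eps_orth:
  fixes T A :: "'a::real_inner \<Rightarrow>\<^sub>L 'b::real_inner"
  assumes "attain_eps_orth eps T A"
  shows "bj_eps_orth eps T A"
  unfolding bj_eps_orth_def
proof
  fix l :: real
  obtain x where x: "norm x = 1" "norm (T x) = norm T"
    and small: "\<bar>inner (T x) (A x)\<bar> \<le> eps * norm T * norm A"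
    using assms by (auto simp: attain_eps_orth_def norm_attain_def)
  have "\<bar>l * inner (T x) (A x)\<bar> \<le> \<bar>l\<bar> * (eps * norm T * norm A)"
    unfolding abs_mult using small by (simp add: mult_left_mono)
  moreover have "(norm ((T + l *\<^sub>R A) x))\<^sup>2
      = (norm T)\<^sup>2 + 2 * (l * inner (T x) (A x)) + l\<^sup>2 * (norm (A x))\<^sup>2"
    using power2_norm_add_scaleR[of "T x" l "A x"] x
    by (simp add: blinfun.add_left blinfun.scaleR_left mult.assoc)
  moreover have "(norm ((T + l *\<^sub>R A) x))\<^sup>2 \<le> (norm (T + l *\<^sub>R A))\<^sup>2"
    using norm_blinfun[of "T + l *\<^sub>R A" x] x by (simp add: power_mono)
  moreover have "0 \<le> l\<^sup>2 * (norm (A x))\<^sup>2" by simp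
  moreover have "2 * eps * norm T * norm (l *\<^sub>R A) = 2 * (\<bar>l\<bar> * (eps * norm T * norm A))"
    by simp
  ultimately show "(norm T)\<^sup>2 - 2 * eps * norm T * norm (l *\<^sub>R A) \<le> (norm (T + l *\<^sub>R A))\<^sup>2"
    unfolding abs_le_iff by linarith
qed

lemma exists_lower_bound_on_span:
  fixes T A :: "'a::real_inner \<Rightarrow>\<^sub>L 'b::real_inner"
  assumes F: "finite F" "orthonormal F"
    and pos: "\<And>x. x \<in> unit_sphere_of (span F) \<Longrightarrow> c < inner (T x) (A x)"
  obtains m where "c < m" "\<And>x. x \<in> span F \<Longrightarrow> m * (norm x)\<^sup>2 \<le> inner (T x) (A x)"
proof -
  obtain m where "c < m"
    and sphere: "\<And>u. u \<in> unit_sphere_of (span F) \<Longrightarrow> m \<le> inner (T u) (A u)"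
  proof (cases "unit_sphere_of (span F) = {}")
    case False
    have "continuous_on (unit_sphere_of (span F)) (\<lambda>u. inner (T u) (A u))"
      by (intro continuous_intros)
    then obtain u0 where "u0 \<in> unit_sphere_of (span F)"
      "\<And>u. u \<in> unit_sphere_of (span F) \<Longrightarrow> inner (T u0) (A u0) \<le> inner (T u) (A u)"
      using continuous_attains_inf[OF compact_unit_sphere_span[OF F] False] by blast
    then show thesis using that pos by blast
  qed (use that[of "c + 1"] in simp)
  have "m * (norm x)\<^sup>2 \<le> inner (T x) (A x)" if "x \<in> span F" for x
  proof (cases "x = 0")
    case False
    then have "x /\<^sub>R norm x \<in> unit_sphere_of (span F)"
      using that by (simp add: unit_sphere_of_def span_mul)
    moreover have "inner (T (x /\<^sub>R norm x)) (A (x /\<^sub>R norm x)) = inner (T x) (A x) / (norm x)\<^sup>2"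
      by (simp add: blinfun.scaleR_right power2_eq_square field_simps)
    ultimately have "m \<le> inner (T x) (A x) / (norm x)\<^sup>2"
      using sphere by metis
    then show ?thesis using False by (simp add: pos_le_divide_eq)
  qed simp
  then show thesis using that \<open>c < m\<close> by blast
qed

lemma power2_norm_apply_orthogonal_sum:
  fixes T :: "'a::real_inner \<Rightarrow>\<^sub>L 'b::real_inner"
  assumes "x \<in> H" "H \<subseteq> max_eigenspace T" "y \<in> orthogonal_comp H"
  shows "(norm (T (x + y)))\<^sup>2
    \<le> (norm T)\<^sup>2 * (norm x)\<^sup>2 + (restr_norm T (orthogonal_comp H))\<^sup>2 * (norm y)\<^sup>2"
proof -
  let ?R = "restr_norm T (orthogonal_comp H)"
  have "inner x y = 0"
    using assms(1,3) by (simp add: orthogonal_comp_def orthogonal_def)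
  then have "orthogonal (T x) (T y)"
    using assms(1,2) by (auto simp: max_eigenspace_def orthogonal_def)
  then have "(norm (T (x + y)))\<^sup>2 = (norm (T x))\<^sup>2 + (norm (T y))\<^sup>2"
    by (simp add: blinfun.add_right norm_add_Pythagorean)
  moreover have "norm (T x) = norm T * norm x"
    using assms(1,2) norm_apply_max_eigenspace by blast
  moreover have "(norm (T y))\<^sup>2 \<le> (?R * norm y)\<^sup>2"
    using norm_apply_le_restr_norm[OF subspace_orthogonal_comp assms(3), of T] by (simp add: power_mono)
  ultimately show ?thesis by (simp add: power_mult_distrib)
qed

lemma inner_apply_add_ge:
  fixes T A :: "'a::real_inner \<Rightarrow>\<^sub>L 'b::real_inner"
  assumes x: "norm x \<le> 1" and y: "norm y \<le> 1"
  shows "inner (T x) (A x) - 3 * (norm T * norm A) * norm y \<le> inner (T (x + y)) (A (x + y))"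
proof -
  let ?C = "norm T * norm A"
  have cs: "\<bar>inner (T u) (A v)\<bar> \<le> ?C * (norm u * norm v)" for u v
  proof -
    have "\<bar>inner (T u) (A v)\<bar> \<le> norm (T u) * norm (A v)" by (rule Cauchy_Schwarz_ineq2)
    also have "\<dots> \<le> (norm T * norm u) * (norm A * norm v)"
      by (intro mult_mono norm_blinfun) simp_all
    finally show ?thesis by (simp add: algebra_simps)
  qed
  have "norm x * norm y \<le> norm y" "norm y * norm x \<le> norm y" "norm y * norm y \<le> norm y"
    using x y by (simp_all add: mult_left_le_one_le mult_right_le_one_le)
  then have "?C * (norm x * norm y) \<le> ?C * norm y" "?C * (norm y * norm x) \<le> ?C * norm y"
    "?C * (norm y * norm y) \<le> ?C * norm y"
    by (simp_all add: mult_left_mono)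
  moreover have "inner (T (x + y)) (A (x + y))
      = inner (T x) (A x) + inner (T x) (A y) + inner (T y) (A x) + inner (T y) (A y)"
    by (simp add: blinfun.add_right inner_add_left inner_add_right)
  ultimately show ?thesis
    using cs[of x y] cs[of y x] cs[of y y] by (simp add: abs_le_iff)
qed

lemma exists_small_step:
  fixes k m d C a :: real
  assumes "0 < k" "0 < m" "0 < d" "0 \<le> C"
  obtains l where "0 < l"
    "\<And>q. 2 * l * m * q\<^sup>2 + 6 * l * C * q + l\<^sup>2 * a\<^sup>2 \<le> k * q\<^sup>2 + l * d"
proof -
  define B where "B = 18 * C\<^sup>2 / k + a\<^sup>2 + 1"
  define l where "l = min (k / (4 * m)) (d / B)"
  have "0 < B" using assms by (simp add: B_def add_nonneg_pos)
  then have l: "0 < l" "2 * l * m \<le> k / 2" "l * B \<le> d"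
    using assms by (auto simp: l_def field_simps min_def)
  have "2 * l * m * q\<^sup>2 + 6 * l * C * q + l\<^sup>2 * a\<^sup>2 \<le> k * q\<^sup>2 + l * d" for q
  proof -
    have "2 * l * m * q\<^sup>2 \<le> k / 2 * q\<^sup>2"
      using mult_right_mono[OF l(2) zero_le_power2[of q]] by simp
    moreover have "0 \<le> k / 2 * (q - 6 * l * C / k)\<^sup>2"
      using assms by simp
    moreover have "k / 2 * (q - 6 * l * C / k)\<^sup>2 = k / 2 * q\<^sup>2 - 6 * l * C * q + 18 * l\<^sup>2 * C\<^sup>2 / k"
      using assms by (simp add: field_simps power2_eq_square)
    moreover have "l * (l * B) \<le> l * d"
      using l by (simp add: mult_left_mono)
    then have "18 * l\<^sup>2 * C\<^sup>2 / k + l\<^sup>2 * a\<^sup>2 + l\<^sup>2 \<le> l * d"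
      by (simp add: B_def algebra_simps power2_eq_square)
    ultimately show ?thesis
      using zero_le_power2[of l] by linarith
  qed
  then show thesis using that l(1) by blast
qed

lemma power2_norm_diff_scaleR_apply_le:
  fixes T A :: "'a::real_inner \<Rightarrow>\<^sub>L 'b::real_inner"
  assumes F: "finite F" "orthonormal F" and E: "span F \<subseteq> max_eigenspace T"
    and m: "\<And>x. x \<in> span F \<Longrightarrow> m * (norm x)\<^sup>2 \<le> inner (T x) (A x)"
    and "0 \<le> l" and "norm z = 1"
  obtains q where "(norm ((T - l *\<^sub>R A) z))\<^sup>2
    \<le> (1 - q\<^sup>2) * ((norm T)\<^sup>2 - 2 * l * m) + (restr_norm T (orthogonal_comp (span F)))\<^sup>2 * q\<^sup>2
       + 6 * l * (norm T * norm A) * q + l\<^sup>2 * (norm A)\<^sup>2"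
proof -
  define N R a where "N = norm T" and "R = restr_norm T (orthogonal_comp (span F))"
    and "a = norm A"
  define x y where "x = orth_proj F z" and "y = z - orth_proj F z"
  define q where "q = norm y"
  have x: "x \<in> span F" and y: "y \<in> orthogonal_comp (span F)" and z: "z = x + y"
    using diff_orth_proj_in_orthogonal_comp[OF F] by (simp_all add: x_def y_def orth_proj_in_span)
  have "orthogonal x y"
    using x y by (simp add: orthogonal_comp_def)
  then have xy: "(norm x)\<^sup>2 = 1 - q\<^sup>2"
    using norm_add_Pythagorean[of x y] z \<open>norm z = 1\<close> by (simp add: q_def)
  have "norm x \<le> 1"
    using power2_le_imp_le[of "norm x" 1] xy zero_le_power2[of q] by simp
  have "norm y \<le> 1"
    using power2_le_imp_le[of q 1] xy zero_le_power2[of "norm x"] by (simp add: q_def)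
  have Tz: "(norm (T z))\<^sup>2 \<le> N\<^sup>2 * (norm x)\<^sup>2 + R\<^sup>2 * q\<^sup>2"
    using power2_norm_apply_orthogonal_sum[OF x E y] by (simp add: z N_def R_def q_def)
  have "l * (m * (norm x)\<^sup>2 - 3 * (N * a) * q) \<le> l * inner (T z) (A z)"
    using m[OF x] inner_apply_add_ge[OF \<open>norm x \<le> 1\<close> \<open>norm y \<le> 1\<close>, of T A] \<open>0 \<le> l\<close>
    by (simp add: z N_def a_def q_def mult_left_mono)
  moreover have "l\<^sup>2 * (norm (A z))\<^sup>2 \<le> l\<^sup>2 * a\<^sup>2"
    using norm_blinfun[of A z] \<open>norm z = 1\<close> by (simp add: a_def mult_left_mono power_mono)
  moreover have "(norm ((T - l *\<^sub>R A) z))\<^sup>2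
      = (norm (T z))\<^sup>2 - 2 * (l * inner (T z) (A z)) + l\<^sup>2 * (norm (A z))\<^sup>2"
    using power2_norm_add_scaleR[of "T z" "- l" "A z"]
    by (simp add: blinfun.diff_left blinfun.scaleR_left)
  moreover have "(1 - q\<^sup>2) * (N\<^sup>2 - 2 * l * m) + 6 * l * (N * a) * q
      = N\<^sup>2 * (norm x)\<^sup>2 - 2 * (l * (m * (norm x)\<^sup>2 - 3 * (N * a) * q))"
    by (simp add: xy algebra_simps)
  ultimately have "(norm ((T - l *\<^sub>R A) z))\<^sup>2
      \<le> (1 - q\<^sup>2) * (N\<^sup>2 - 2 * l * m) + R\<^sup>2 * q\<^sup>2 + 6 * l * (N * a) * q + l\<^sup>2 * a\<^sup>2"
    using Tz by linarith
  then show thesis using that by (simp add: N_def R_def a_def)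
qed

lemma not_bj_eps_orth_if_inner_gt:
  fixes T A :: "'a::real_inner \<Rightarrow>\<^sub>L 'b::real_inner"
  assumes T0: "T \<noteq> 0" and eps: "0 \<le> eps" and F: "finite F" "orthonormal F"
    and MT: "norm_attain T = unit_sphere_of (span F)"
    and R: "restr_norm T (orthogonal_comp (span F)) < norm T"
    and pos: "\<And>x. x \<in> norm_attain T \<Longrightarrow> eps * norm T * norm A < inner (T x) (A x)"
  shows "\<not> bj_eps_orth eps T A"
proof
  assume bj: "bj_eps_orth eps T A"
  define N R a c where "N = norm T" and "R = restr_norm T (orthogonal_comp (span F))"
    and "a = norm A" and "c = eps * N * a"
  obtain m where "c < m" and m: "\<And>x. x \<in> span F \<Longrightarrow> m * (norm x)\<^sup>2 \<le> inner (T x) (A x)"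
    using exists_lower_bound_on_span[OF F] pos MT by (metis N_def a_def c_def)
  have "0 \<le> R" unfolding R_def by (rule restr_norm_nonneg[OF subspace_orthogonal_comp])
  then have "0 < N\<^sup>2 - R\<^sup>2" using R by (simp add: N_def R_def power_strict_mono)
  moreover have "0 \<le> c" using eps by (simp add: c_def N_def a_def)
  ultimately obtain l where "0 < l" and l:
    "\<And>q. 2 * l * m * q\<^sup>2 + 6 * l * (N * a) * q + l\<^sup>2 * a\<^sup>2 \<le> (N\<^sup>2 - R\<^sup>2) * q\<^sup>2 + l * (m - c)"
    using exists_small_step[of "N\<^sup>2 - R\<^sup>2" m "m - c" "N * a"] \<open>c < m\<close> by (auto simp: N_def a_def)
  have "(norm ((T - l *\<^sub>R A) z))\<^sup>2 \<le> N\<^sup>2 - l * m - l * c" if z: "norm z = 1" for z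
  proof -
    obtain q where "(norm ((T - l *\<^sub>R A) z))\<^sup>2
        \<le> (1 - q\<^sup>2) * (N\<^sup>2 - 2 * l * m) + R\<^sup>2 * q\<^sup>2 + 6 * l * (N * a) * q + l\<^sup>2 * a\<^sup>2"
      using power2_norm_diff_scaleR_apply_le[OF F subspace_subset_max_eigenspace[OF subspace_span MT]
          m less_imp_le[OF \<open>0 < l\<close>] z]
      unfolding N_def R_def a_def by blast
    moreover have "(1 - q\<^sup>2) * (N\<^sup>2 - 2 * l * m) + R\<^sup>2 * q\<^sup>2 + 6 * l * (N * a) * q + l\<^sup>2 * a\<^sup>2
        = N\<^sup>2 - 2 * l * m + (2 * l * m * q\<^sup>2 + 6 * l * (N * a) * q + l\<^sup>2 * a\<^sup>2) - (N\<^sup>2 - R\<^sup>2) * q\<^sup>2"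
      by (simp add: algebra_simps)
    moreover have "l * (m - c) = l * m - l * c" by (simp add: right_diff_distrib)
    ultimately show ?thesis using l[of q] by linarith
  qed
  moreover obtain u :: 'a where "norm u = 1" using exists_unit_vector_if_blinfun_nonzero[OF T0] .
  ultimately have "(norm (T - l *\<^sub>R A))\<^sup>2 \<le> N\<^sup>2 - l * m - l * c"
    using power2_norm_blinfun_le by blast
  moreover have "N\<^sup>2 - 2 * l * c \<le> (norm (T - l *\<^sub>R A))\<^sup>2"
    using bj[unfolded bj_eps_orth_def, rule_format, of "- l"] \<open>0 < l\<close>
    by (simp add: N_def a_def c_def algebra_simps)
  moreover have "l * c < l * m"
    using \<open>c < m\<close> \<open>0 < l\<close> by simp
  ultimately show False by linarith
qed

lemma inner_apply_sign_constant:
  fixes T A :: "'a::real_inner \<Rightarrow>\<^sub>L 'b::real_inner"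
  assumes H: "subspace H" and nonzero: "\<And>x. x \<in> unit_sphere_of H \<Longrightarrow> inner (T x) (A x) \<noteq> 0"
  shows "(\<forall>x\<in>unit_sphere_of H. 0 < inner (T x) (A x)) \<or> (\<forall>x\<in>unit_sphere_of H. inner (T x) (A x) < 0)"
proof (rule ccontr)
  define g where "g x = inner (T x) (A x)" for x
  have g_scale: "g (r *\<^sub>R x) = r\<^sup>2 * g x" for r x
    by (simp add: g_def blinfun.scaleR_right power2_eq_square)
  assume "\<not> ?thesis"
  then obtain x1 x2 where x1: "x1 \<in> unit_sphere_of H" "g x1 < 0"
    and x2: "x2 \<in> unit_sphere_of H" "0 < g x2"
    using nonzero by (force simp: g_def not_less order.order_iff_strict)
  define v where "v t = (1 - t) *\<^sub>R x1 + t *\<^sub>R x2" for t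
  have "continuous_on {0..1} (\<lambda>t. g (v t))"
    unfolding g_def v_def by (intro continuous_intros)
  then obtain t where t: "0 \<le> t" "t \<le> 1" "g (v t) = 0"
    using IVT'[of "\<lambda>t. g (v t)" 0 0 1] x1 x2 by (force simp: v_def)
  show False
  proof (cases "v t = 0")
    case False
    have "v t \<in> H" using x1 x2 H by (simp add: v_def unit_sphere_of_def subspace_add subspace_scale)
    then have "v t /\<^sub>R norm (v t) \<in> unit_sphere_of H"
      using False H by (simp add: unit_sphere_of_def subspace_scale)
    moreover have "g (v t /\<^sub>R norm (v t)) = 0" using t(3) g_scale by simp
    ultimately show False using nonzero by (simp add: g_def)
  next
    case True
    then have "t \<noteq> 0" using x1 by (auto simp: v_def unit_sphere_of_def)
    have "t *\<^sub>R x2 = (t - 1) *\<^sub>R x1"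
      using True by (simp add: v_def algebra_simps)
    then have "(1 / t) *\<^sub>R (t *\<^sub>R x2) = ((t - 1) / t) *\<^sub>R x1"
      by simp
    then have "g x2 = ((t - 1) / t)\<^sup>2 * g x1"
      using \<open>t \<noteq> 0\<close> g_scale by simp
    then show False
      using x1(2) x2(2) by (smt (verit) mult_nonneg_nonpos zero_le_power2)
  qed
qed

lemma attain_eps_orth_if_bj_eps_orth:
  fixes T A :: "'a::real_inner \<Rightarrow>\<^sub>L 'b::real_inner"
  assumes T0: "T \<noteq> 0" and eps: "0 \<le> eps"
    and fin: "finitely_norm_attaining T" and bj: "bj_eps_orth eps T A"
  shows "attain_eps_orth eps T A"
proof (rule ccontr)
  obtain H0 where H0: "fin_dim_subspace H0" "norm_attain T = unit_sphere_of H0"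
    and R: "restr_norm T (orthogonal_comp H0) < norm T"
    using fin by (auto simp: finitely_norm_attaining_def)
  obtain F where F: "finite F" "orthonormal F" "H0 = span F"
    using fin_dim_subspace_orthonormal_basis[OF H0(1)] by blast
  let ?c = "eps * norm T * norm A"
  assume "\<not> attain_eps_orth eps T A"
  then have large: "?c < \<bar>inner (T x) (A x)\<bar>" if "x \<in> norm_attain T" for x
    using that by (auto simp: attain_eps_orth_def)
  have "0 \<le> ?c" using eps by simp
  then have "(\<forall>x\<in>norm_attain T. 0 < inner (T x) (A x)) \<or> (\<forall>x\<in>norm_attain T. inner (T x) (A x) < 0)"
    using inner_apply_sign_constant[OF subspace_span, of F T A] large H0(2) F(3) by force
  then show False
  proof
    assume "\<forall>x\<in>norm_attain T. 0 < inner (T x) (A x)"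
    then have "\<not> bj_eps_orth eps T A"
      using large H0(2) F R by (intro not_bj_eps_orth_if_inner_gt[OF T0 eps F(1,2)]) force+
    then show False using bj by simp
  next
    assume "\<forall>x\<in>norm_attain T. inner (T x) (A x) < 0"
    then have "\<not> bj_eps_orth eps T (- A)"
      using large H0(2) F R
      by (intro not_bj_eps_orth_if_inner_gt[OF T0 eps F(1,2)]) (force simp: blinfun.minus_left)+
    then show False using bj_eps_orth_uminus[OF bj] by simp
  qed
qed

lemma bj_eps_orth_iff_attain_eps_orth:
  fixes T A :: "'a::real_inner \<Rightarrow>\<^sub>L 'b::real_inner"
  assumes "T \<noteq> 0" "0 \<le> eps" "finitely_norm_attaining T"
  shows "bj_eps_orth eps T A \<longleftrightarrow> attain_eps_orth eps T A"
  using attain_eps_orth_if_bj_eps_orth[OF assms] bj_eps_orth_if_attain_eps_orth by blast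

lemma bj_eps_orth_iff_inner_eps_orth:
  fixes T A :: "'a::real_inner \<Rightarrow>\<^sub>L 'b::real_inner"
  assumes "T \<noteq> 0" "0 \<le> eps" "finitely_norm_attaining T" "norm_attain T \<subseteq> norm_attain A"
  shows "bj_eps_orth eps T A \<longleftrightarrow> (\<exists>x\<in>norm_attain T. inner_eps_orth eps (T x) (A x))"
proof -
  have "inner_eps_orth eps (T x) (A x) \<longleftrightarrow> \<bar>inner (T x) (A x)\<bar> \<le> eps * norm T * norm A"
    if "x \<in> norm_attain T" for x
    using that assms(4) by (auto simp: inner_eps_orth_def norm_attain_def)
  then show ?thesis
    using bj_eps_orth_iff_attain_eps_orth[OF assms(1-3)] by (auto simp: attain_eps_orth_def)
qed

section \<open>Orthonormal sequences and diagonal operators\<close>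

definition orthonormal_seq :: "(nat \<Rightarrow> 'a::real_inner) \<Rightarrow> bool" where
  "orthonormal_seq e \<longleftrightarrow> (\<forall>n. norm (e n) = 1) \<and> (\<forall>m n. m \<noteq> n \<longrightarrow> inner (e m) (e n) = 0)"

lemma inner_orthonormal_seq:
  "orthonormal_seq e \<Longrightarrow> inner (e m) (e n) = (if m = n then 1 else 0)"
  by (auto simp: orthonormal_seq_def power2_norm_eq_inner[symmetric])

lemma power2_norm_sum_orthonormal_seq:
  assumes "orthonormal_seq e" "finite I"
  shows "(norm (\<Sum>n\<in>I. c n *\<^sub>R e n))\<^sup>2 = (\<Sum>n\<in>I. (c n)\<^sup>2)"
proof -
  have "(norm (\<Sum>n\<in>I. c n *\<^sub>R e n))\<^sup>2 = (\<Sum>n\<in>I. c n * inner (e n) (\<Sum>k\<in>I. c k *\<^sub>R e k))"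
    by (simp add: power2_norm_eq_inner inner_sum_left)
  also have "\<dots> = (\<Sum>n\<in>I. (c n)\<^sup>2)"
    using assms by (intro sum.cong)
      (simp_all add: inner_sum_right inner_orthonormal_seq if_distrib power2_eq_square cong: if_cong)
  finally show ?thesis .
qed

lemma bessel_inequality:
  assumes "orthonormal_seq e"
  shows "summable (\<lambda>n. (inner (e n) x)\<^sup>2)" and "(\<Sum>n. (inner (e n) x)\<^sup>2) \<le> (norm x)\<^sup>2"
proof -
  have partial: "(\<Sum>n<N. (inner (e n) x)\<^sup>2) \<le> (norm x)\<^sup>2" for N
  proof -
    define S where "S = (\<Sum>n<N. inner (e n) x *\<^sub>R e n)"
    have "(norm S)\<^sup>2 = (\<Sum>n<N. (inner (e n) x)\<^sup>2)"
      unfolding S_def by (rule power2_norm_sum_orthonormal_seq[OF assms]) simp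
    moreover have "inner x S = (\<Sum>n<N. (inner (e n) x)\<^sup>2)"
      by (simp add: S_def inner_sum_right inner_commute power2_eq_square)
    ultimately show ?thesis
      using power2_norm_add_scaleR[of x "- 1" S] zero_le_power2[of "norm (x - S)"] by simp
  qed
  show "summable (\<lambda>n. (inner (e n) x)\<^sup>2)"
    by (rule summableI_nonneg_bounded[where x = "(norm x)\<^sup>2"]) (simp_all add: partial)
  then show "(\<Sum>n. (inner (e n) x)\<^sup>2) \<le> (norm x)\<^sup>2"
    by (rule suminf_le_const) (rule partial)
qed

lemma summable_orthonormal_seq:
  fixes e :: "nat \<Rightarrow> 'a::{real_inner, complete_space}"
  assumes e: "orthonormal_seq e" and c: "summable (\<lambda>n. (c n)\<^sup>2)"
  shows "summable (\<lambda>n. c n *\<^sub>R e n)"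
  unfolding summable_iff_convergent Cauchy_convergent_iff [symmetric] Cauchy_iff
proof (intro allI impI)
  fix r :: real assume "0 < r"
  then obtain M where M: "\<And>m n. M \<le> m \<Longrightarrow> norm (\<Sum>k\<in>{m..<n}. (c k)\<^sup>2) < r\<^sup>2"
    using c[unfolded summable_Cauchy, rule_format, of "r\<^sup>2"] by auto
  have tail: "norm (\<Sum>k\<in>{m..<n}. c k *\<^sub>R e k) < r" if "M \<le> m" for m n
  proof -
    have "(norm (\<Sum>k\<in>{m..<n}. c k *\<^sub>R e k))\<^sup>2 = (\<Sum>k\<in>{m..<n}. (c k)\<^sup>2)"
      by (rule power2_norm_sum_orthonormal_seq[OF e]) simp
    also have "\<dots> < r\<^sup>2"
      using M[OF that, of n] by (simp add: abs_of_nonneg sum_nonneg)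
    finally show ?thesis
      by (rule power_less_imp_less_base) (simp add: \<open>0 < r\<close> less_imp_le)
  qed
  have "norm ((\<Sum>k<m. c k *\<^sub>R e k) - (\<Sum>k<n. c k *\<^sub>R e k)) < r" if "M \<le> m" "M \<le> n" for m n
  proof (cases m n rule: le_cases)
    case le
    then have "(\<Sum>k<n. c k *\<^sub>R e k) - (\<Sum>k<m. c k *\<^sub>R e k) = (\<Sum>k\<in>{m..<n}. c k *\<^sub>R e k)"
      using sum_diff_nat_ivl[of 0 m n "\<lambda>k. c k *\<^sub>R e k"] by (simp add: atLeast0LessThan)
    then show ?thesis
      using tail[OF that(1), of n] norm_minus_commute[of "\<Sum>k<m. c k *\<^sub>R e k"] by simp
  next
    case ge
    then show ?thesis
      using tail[OF that(2), of m] sum_diff_nat_ivl[of 0 n m "\<lambda>k. c k *\<^sub>R e k"]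
      by (simp add: atLeast0LessThan)
  qed
  then show "\<exists>M. \<forall>m\<ge>M. \<forall>n\<ge>M. norm ((\<Sum>k<m. c k *\<^sub>R e k) - (\<Sum>k<n. c k *\<^sub>R e k)) < r"
    by blast
qed

definition diag_op :: "(nat \<Rightarrow> real) \<Rightarrow> (nat \<Rightarrow> 'a::real_inner) \<Rightarrow> 'a \<Rightarrow> 'a" where
  "diag_op w e x = (\<Sum>n. (w n * inner (e n) x) *\<^sub>R e n)"

lemma power2_mult_le_if_abs_le_1:
  fixes w c :: real
  assumes "\<bar>w\<bar> \<le> 1"
  shows "(w * c)\<^sup>2 \<le> c\<^sup>2"
proof -
  have "w\<^sup>2 * c\<^sup>2 \<le> 1 * c\<^sup>2"
    using assms by (intro mult_right_mono) (simp_all add: abs_square_le_1)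
  then show ?thesis by (simp add: power_mult_distrib)
qed

lemma summable_diag_op_coeffs:
  assumes e: "orthonormal_seq e" and w: "\<forall>n. \<bar>w n\<bar> \<le> 1"
  shows "summable (\<lambda>n. (w n * inner (e n) x)\<^sup>2)"
  by (rule summable_comparison_test'[OF bessel_inequality(1)[OF e, of x]])
    (simp add: power2_mult_le_if_abs_le_1 w)

lemma summable_diag_op:
  fixes e :: "nat \<Rightarrow> 'a::{real_inner, complete_space}"
  assumes e: "orthonormal_seq e" and w: "\<forall>n. \<bar>w n\<bar> \<le> 1"
  shows "summable (\<lambda>n. (w n * inner (e n) x) *\<^sub>R e n)"
  by (rule summable_orthonormal_seq[OF e summable_diag_op_coeffs[OF e w]])

lemma inner_diag_op:
  fixes e :: "nat \<Rightarrow> 'a::{real_inner, complete_space}"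
  assumes e: "orthonormal_seq e" and w: "\<forall>n. \<bar>w n\<bar> \<le> 1"
  shows "inner (diag_op w e x) y = (\<Sum>n. w n * inner (e n) x * inner (e n) y)"
  unfolding diag_op_def
  using bounded_linear.suminf[OF bounded_linear_inner_left[of y] summable_diag_op[OF e w]]
  by simp

lemma diag_op_orthonormal_seq:
  assumes e: "orthonormal_seq e"
  shows "diag_op w e (e k) = w k *\<^sub>R e k"
proof -
  have "(\<lambda>n. (w n * inner (e n) (e k)) *\<^sub>R e n) = (\<lambda>n. if n = k then w k *\<^sub>R e k else 0)"
    using inner_orthonormal_seq[OF e] by auto
  then show ?thesis
    unfolding diag_op_def using sums_single[of k "\<lambda>_. w k *\<^sub>R e k"] sums_unique by metis
qed

lemma inner_diag_op_orthonormal_seq: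
  fixes e :: "nat \<Rightarrow> 'a::{real_inner, complete_space}"
  assumes e: "orthonormal_seq e" and w: "\<forall>n. \<bar>w n\<bar> \<le> 1"
  shows "inner (e k) (diag_op w e x) = w k * inner (e k) x"
proof -
  have "(\<lambda>n. w n * inner (e n) x * inner (e n) (e k)) = (\<lambda>n. if n = k then w k * inner (e k) x else 0)"
    using inner_orthonormal_seq[OF e] by auto
  then have "(\<Sum>n. w n * inner (e n) x * inner (e n) (e k)) = w k * inner (e k) x"
    using sums_single[of k "\<lambda>_. w k * inner (e k) x"] sums_unique by metis
  then show ?thesis using inner_diag_op[OF e w] by (simp add: inner_commute)
qed

lemma power2_norm_diag_op:
  fixes e :: "nat \<Rightarrow> 'a::{real_inner, complete_space}"
  assumes e: "orthonormal_seq e" and w: "\<forall>n. \<bar>w n\<bar> \<le> 1"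
  shows "(norm (diag_op w e x))\<^sup>2 = (\<Sum>n. (w n * inner (e n) x)\<^sup>2)"
  using inner_diag_op[OF e w, of x "diag_op w e x"] inner_diag_op_orthonormal_seq[OF e w]
  by (simp add: power2_norm_eq_inner[symmetric] power2_eq_square)

lemma bounded_linear_diag_op:
  fixes e :: "nat \<Rightarrow> 'a::{real_inner, complete_space}"
  assumes e: "orthonormal_seq e" and w: "\<forall>n. \<bar>w n\<bar> \<le> 1"
  shows "bounded_linear (diag_op w e)"
proof (rule bounded_linear_intro[where K = 1])
  fix x y :: 'a and r :: real
  have "(\<lambda>n. (w n * inner (e n) (x + y)) *\<^sub>R e n)
      = (\<lambda>n. (w n * inner (e n) x) *\<^sub>R e n + (w n * inner (e n) y) *\<^sub>R e n)"
    by (simp add: inner_add_right distrib_left scaleR_add_left)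
  then show "diag_op w e (x + y) = diag_op w e x + diag_op w e y"
    unfolding diag_op_def
    using suminf_add[OF summable_diag_op[OF e w, of x] summable_diag_op[OF e w, of y]] by simp
  have "(\<lambda>n. (w n * inner (e n) (r *\<^sub>R x)) *\<^sub>R e n) = (\<lambda>n. r *\<^sub>R ((w n * inner (e n) x) *\<^sub>R e n))"
    by (simp add: mult.left_commute)
  then show "diag_op w e (r *\<^sub>R x) = r *\<^sub>R diag_op w e x"
    unfolding diag_op_def
    using suminf_scaleR_right[OF summable_diag_op[OF e w, of x], of r] by simp
  have "(\<Sum>n. (w n * inner (e n) x)\<^sup>2) \<le> (\<Sum>n. (inner (e n) x)\<^sup>2)"
    using summable_diag_op_coeffs[OF e w] bessel_inequality(1)[OF e]
    by (intro suminf_le) (simp_all add: power2_mult_le_if_abs_le_1 w)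
  then have "(norm (diag_op w e x))\<^sup>2 \<le> (norm x)\<^sup>2"
    using power2_norm_diag_op[OF e w] bessel_inequality(2)[OF e, of x] by simp
  then have "norm (diag_op w e x) \<le> norm x"
    by (rule power2_le_imp_le) simp
  then show "norm (diag_op w e x) \<le> norm x * 1" by simp
qed

lemma inner_diff_diag_op:
  fixes e :: "nat \<Rightarrow> 'a::{real_inner, complete_space}"
  assumes e: "orthonormal_seq e" and w: "\<forall>n. \<bar>w n\<bar> \<le> 1"
  shows "inner x (x - diag_op w e x) = (norm x)\<^sup>2 - (\<Sum>n. w n * (inner (e n) x)\<^sup>2)"
  using inner_diag_op[OF e w, of x x]
  by (simp add: inner_diff_right inner_commute dot_square_norm power2_eq_square mult.assoc)

lemma norm_diff_diag_op_le:
  fixes e :: "nat \<Rightarrow> 'a::{real_inner, complete_space}"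
  assumes e: "orthonormal_seq e" and w: "\<forall>n. 0 \<le> w n \<and> w n \<le> 1"
  shows "norm (x - diag_op w e x) \<le> norm x"
proof -
  let ?S = "\<Sum>n. w n * (inner (e n) x)\<^sup>2"
  have w1: "\<forall>n. \<bar>w n\<bar> \<le> 1" using w by auto
  have "summable (\<lambda>n. w n * (inner (e n) x)\<^sup>2)"
    using w by (intro summable_comparison_test'[OF bessel_inequality(1)[OF e, of x]])
      (simp add: mult_left_le_one_le)
  moreover have "(w n * inner (e n) x)\<^sup>2 \<le> w n * (inner (e n) x)\<^sup>2" for n
  proof -
    have "w n * (w n * (inner (e n) x)\<^sup>2) \<le> 1 * (w n * (inner (e n) x)\<^sup>2)"
      using w by (intro mult_right_mono) auto
    then show ?thesis by (simp add: power2_eq_square algebra_simps)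
  qed
  ultimately have "(norm (diag_op w e x))\<^sup>2 \<le> ?S"
    using power2_norm_diag_op[OF e w1] summable_diag_op_coeffs[OF e w1] by (simp add: suminf_le)
  moreover have "0 \<le> ?S"
    using \<open>summable _\<close> w by (intro suminf_nonneg mult_nonneg_nonneg) auto
  moreover have "(norm (x - diag_op w e x))\<^sup>2 = (norm x)\<^sup>2 - 2 * ?S + (norm (diag_op w e x))\<^sup>2"
    using power2_norm_add_scaleR[of x "- 1" "diag_op w e x"] inner_diag_op[OF e w1, of x x]
    by (simp add: inner_commute power2_eq_square mult.assoc)
  ultimately have "(norm (x - diag_op w e x))\<^sup>2 \<le> (norm x)\<^sup>2" by linarith
  then show ?thesis by (rule power2_le_imp_le) simp
qed

lemma weighted_bessel_less:
  assumes e: "orthonormal_seq e" and w: "\<forall>n. 0 \<le> w n \<and> w n < b" and "x \<noteq> 0"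
  shows "(\<Sum>n. w n * (inner (e n) x)\<^sup>2) < b * (norm x)\<^sup>2"
proof -
  let ?c = "\<lambda>n. (inner (e n) x)\<^sup>2"
  have "0 < b" using w by (meson le_less_trans)
  have sum_c: "summable ?c" by (rule bessel_inequality(1)[OF e])
  have sum_wc: "summable (\<lambda>n. w n * ?c n)"
    using w by (intro summable_comparison_test'[OF summable_mult[OF sum_c, of b]])
      (simp add: less_imp_le mult_right_mono)
  show ?thesis
  proof (cases "\<exists>k. inner (e k) x \<noteq> 0")
    case True
    then obtain k where "inner (e k) x \<noteq> 0" by blast
    then have "0 < (\<Sum>n. b * ?c n - w n * ?c n)"
      using w by (intro suminf_pos2[of _ k] summable_diff summable_mult sum_c sum_wc)
        (simp_all add: mult_right_mono less_imp_le)
    then have "(\<Sum>n. w n * ?c n) < (\<Sum>n. b * ?c n)"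
      using suminf_diff[OF summable_mult[OF sum_c, of b] sum_wc] by simp
    also have "\<dots> \<le> b * (norm x)\<^sup>2"
      using suminf_mult[OF sum_c, of b] bessel_inequality(2)[OF e, of x] \<open>0 < b\<close> by simp
    finally show ?thesis .
  next
    case False
    then show ?thesis using \<open>0 < b\<close> \<open>x \<noteq> 0\<close> by simp
  qed
qed

lemma bj_eps_orth_if_scaled_on_seq:
  fixes T A :: "'a::real_normed_vector \<Rightarrow>\<^sub>L 'b::real_normed_vector"
  assumes eps: "0 \<le> eps" and nA: "norm A = norm T" and u: "\<And>k. u k \<in> norm_attain T"
    and Au: "\<And>k. A (u k) = s k *\<^sub>R T (u k)" and s: "s \<longlonglongrightarrow> eps"
  shows "bj_eps_orth eps T A"
  unfolding bj_eps_orth_def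
proof
  fix l :: real
  have "\<bar>1 + l * s k\<bar> * norm T \<le> norm (T + l *\<^sub>R A)" for k
  proof -
    have "(T + l *\<^sub>R A) (u k) = (1 + l * s k) *\<^sub>R T (u k)"
      by (simp add: blinfun.add_left blinfun.scaleR_left Au algebra_simps)
    then show ?thesis
      using norm_blinfun[of "T + l *\<^sub>R A" "u k"] u[of k] by (simp add: norm_attain_def)
  qed
  moreover have "(\<lambda>k. \<bar>1 + l * s k\<bar> * norm T) \<longlonglongrightarrow> \<bar>1 + l * eps\<bar> * norm T"
    by (intro tendsto_intros s)
  ultimately have "\<bar>1 + l * eps\<bar> * norm T \<le> norm (T + l *\<^sub>R A)"
    by (intro LIMSEQ_le_const2) auto
  then have lim: "(1 + l * eps)\<^sup>2 * (norm T)\<^sup>2 \<le> (norm (T + l *\<^sub>R A))\<^sup>2"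
    by (metis abs_ge_zero norm_ge_zero power2_abs power_mono power_mult_distrib zero_le_mult_iff)
  have "- (\<bar>l\<bar> * eps) \<le> l * eps"
    using mult_right_mono[of "- \<bar>l\<bar>" l eps] eps by simp
  moreover have "(1 + l * eps)\<^sup>2 = 1 + 2 * (l * eps) + (l * eps)\<^sup>2"
    by (simp add: power2_eq_square algebra_simps)
  ultimately have "1 - 2 * (\<bar>l\<bar> * eps) \<le> (1 + l * eps)\<^sup>2"
    using zero_le_power2[of "l * eps"] by linarith
  then have "(1 - 2 * (\<bar>l\<bar> * eps)) * (norm T)\<^sup>2 \<le> (1 + l * eps)\<^sup>2 * (norm T)\<^sup>2"
    by (simp add: mult_right_mono)
  moreover have "(norm T)\<^sup>2 - 2 * eps * norm T * norm (l *\<^sub>R A) = (1 - 2 * (\<bar>l\<bar> * eps)) * (norm T)\<^sup>2"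
    by (simp add: nA power2_eq_square algebra_simps)
  ultimately show "(norm T)\<^sup>2 - 2 * eps * norm T * norm (l *\<^sub>R A) \<le> (norm (T + l *\<^sub>R A))\<^sup>2"
    using lim by linarith
qed

section \<open>Condition (1) implies condition (2)\<close>

lemma exists_bj_not_attain_eps_orth_if_restr_norm_ge:
  fixes T :: "'a::real_inner \<Rightarrow>\<^sub>L 'b::real_inner"
  assumes T0: "T \<noteq> 0" and eps: "0 \<le> eps" "eps < 1" and F: "finite F" "orthonormal F"
    and MT: "norm_attain T \<subseteq> span F"
    and R: "norm T \<le> restr_norm T (orthogonal_comp (span F))"
  shows "\<exists>A. bj_eps_orth eps T A \<and> \<not> attain_eps_orth eps T A"
proof -
  define A where "A = Blinfun (\<lambda>z. T (orth_proj F z))"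
  have "bounded_linear (\<lambda>z. T (orth_proj F z))"
    by (rule bounded_linear_compose[OF blinfun.bounded_linear_right bounded_linear_orth_proj[OF F]])
  then have A: "A z = T (orth_proj F z)" for z
    by (simp add: A_def bounded_linear_Blinfun_apply)
  have "norm A \<le> norm T"
  proof (rule norm_blinfun_bound)
    fix z
    have "norm (A z) \<le> norm T * norm (orth_proj F z)"
      unfolding A by (rule norm_blinfun)
    also have "\<dots> \<le> norm T * norm z"
      using norm_orth_proj_le[OF F] by (simp add: mult_left_mono)
    finally show "norm (A z) \<le> norm T * norm z" .
  qed simp
  have "bj_eps_orth eps T A"
  proof (rule bj_eps_orth_if_norm_le[OF eps(1)])
    fix l :: real
    have "restr_norm T (orthogonal_comp (span F)) \<le> norm (T + l *\<^sub>R A)"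
      by (rule restr_norm_le_norm_if_eq_on[OF subspace_orthogonal_comp])
        (simp add: A orth_proj_orthogonal_comp blinfun.add_left blinfun.scaleR_left)
    then show "norm T \<le> norm (T + l *\<^sub>R A)" using R by simp
  qed
  moreover have "\<not> attain_eps_orth eps T A"
  proof
    assume "attain_eps_orth eps T A"
    then obtain x where x: "x \<in> norm_attain T" and small: "\<bar>inner (T x) (A x)\<bar> \<le> eps * norm T * norm A"
      by (auto simp: attain_eps_orth_def)
    have "A x = T x" using MT x orth_proj_id[OF F] by (auto simp: A)
    then have "inner (T x) (A x) = (norm T)\<^sup>2"
      using x by (simp add: norm_attain_def power2_norm_eq_inner[symmetric])
    then have "(norm T)\<^sup>2 \<le> eps * norm T * norm A"
      using small by simp
    also have "\<dots> \<le> eps * norm T * norm T"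
      using \<open>norm A \<le> norm T\<close> eps by (simp add: mult_left_mono)
    also have "\<dots> < (norm T)\<^sup>2"
      using eps T0 by (simp add: power2_eq_square)
    finally show False by simp
  qed
  ultimately show ?thesis by blast
qed

lemma exists_diag_perturbation:
  fixes T :: "'a::{real_inner, complete_space} \<Rightarrow>\<^sub>L 'b::real_inner"
  assumes e: "orthonormal_seq e" and eT: "\<And>n. e n \<in> max_eigenspace T"
    and w: "\<forall>n. 0 \<le> w n \<and> w n \<le> 1" "w 0 = 0"
  obtains A :: "'a \<Rightarrow>\<^sub>L 'b" where "norm A = norm T" "\<And>k. A (e k) = (1 - w k) *\<^sub>R T (e k)"
    "\<And>x. x \<in> norm_attain T \<Longrightarrow>
       inner (T x) (A x) = (norm T)\<^sup>2 * (1 - (\<Sum>n. w n * (inner (e n) x)\<^sup>2))"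
proof -
  have w1: "\<forall>n. \<bar>w n\<bar> \<le> 1" using w(1) by auto
  define A where "A = Blinfun (\<lambda>x. T (x - diag_op w e x))"
  have "bounded_linear (\<lambda>x. T (x - diag_op w e x))"
    by (intro bounded_linear_compose[OF blinfun.bounded_linear_right] bounded_linear_sub
        bounded_linear_ident bounded_linear_diag_op[OF e w1])
  then have A: "A x = T (x - diag_op w e x)" for x
    by (simp add: A_def bounded_linear_Blinfun_apply)
  have Ae: "A (e k) = (1 - w k) *\<^sub>R T (e k)" for k
    by (simp add: A diag_op_orthonormal_seq[OF e] blinfun.diff_right blinfun.scaleR_right
        scaleR_diff_left)
  have "norm A \<le> norm T"
  proof (rule norm_blinfun_bound)
    fix x
    show "norm (A x) \<le> norm T * norm x"
      using norm_blinfun[of T "x - diag_op w e x"] norm_diff_diag_op_le[OF e w(1), of x]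
      by (simp add: A) (meson mult_left_mono norm_ge_zero order_trans)
  qed simp
  moreover have "norm T \<le> norm A"
    using norm_blinfun[of A "e 0"] Ae[of 0] w(2) eT[of 0] e
    by (simp add: norm_apply_max_eigenspace orthonormal_seq_def)
  moreover have "inner (T x) (A x) = (norm T)\<^sup>2 * (1 - (\<Sum>n. w n * (inner (e n) x)\<^sup>2))"
    if "x \<in> norm_attain T" for x
    using inner_apply_norm_attain[OF that] inner_diff_diag_op[OF e w1, of x] that
    by (simp add: A norm_attain_def)
  ultimately show thesis using that Ae by simp
qed

lemma exists_bj_not_attain_eps_orth_if_orthonormal_seq:
  fixes T :: "'a::{real_inner, complete_space} \<Rightarrow>\<^sub>L 'b::real_inner"
  assumes T0: "T \<noteq> 0" and eps: "0 \<le> eps" "eps < 1"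
    and e: "orthonormal_seq e" and eT: "\<And>n. e n \<in> max_eigenspace T"
  shows "\<exists>A. bj_eps_orth eps T A \<and> \<not> attain_eps_orth eps T A"
proof -
  define w where "w n = (1 - eps) * (1 - (1 / 2) ^ n)" for n :: nat
  have w: "\<forall>n. 0 \<le> w n \<and> w n < 1 - eps"
  proof
    fix n
    have "0 < ((1::real) / 2) ^ n" "((1::real) / 2) ^ n \<le> 1"
      by (simp_all add: power_le_one)
    then show "0 \<le> w n \<and> w n < 1 - eps"
      using eps by (simp add: w_def mult_less_cancel_left_pos)
  qed
  then have "\<forall>n. 0 \<le> w n \<and> w n \<le> 1"
    using eps by (smt (verit))
  moreover have "w 0 = 0" by (simp add: w_def)
  ultimately obtain A :: "'a \<Rightarrow>\<^sub>L 'b" where nA: "norm A = norm T" and Ae: "\<And>k. A (e k) = (1 - w k) *\<^sub>R T (e k)"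
    and TA: "\<And>x. x \<in> norm_attain T \<Longrightarrow>
       inner (T x) (A x) = (norm T)\<^sup>2 * (1 - (\<Sum>n. w n * (inner (e n) x)\<^sup>2))"
    using exists_diag_perturbation[OF e eT] by blast
  have "e k \<in> norm_attain T" for k
    using eT e by (simp add: norm_attain_eq_unit_sphere_max_eigenspace unit_sphere_of_def
        orthonormal_seq_def)
  moreover have "(\<lambda>k. 1 - w k) \<longlonglongrightarrow> 1 - (1 - eps) * (1 - 0)"
    unfolding w_def by (intro tendsto_intros LIMSEQ_realpow_zero) simp_all
  ultimately have "bj_eps_orth eps T A"
    by (intro bj_eps_orth_if_scaled_on_seq[OF eps(1) nA _ Ae]) simp_all
  moreover have "\<not> attain_eps_orth eps T A"
  proof
    assume "attain_eps_orth eps T A"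
    then obtain x where x: "x \<in> norm_attain T"
      and small: "\<bar>inner (T x) (A x)\<bar> \<le> eps * norm T * norm A"
      by (auto simp: attain_eps_orth_def)
    have "(\<Sum>n. w n * (inner (e n) x)\<^sup>2) < 1 - eps"
      using weighted_bessel_less[OF e w, of x] x by (fastforce simp: norm_attain_def)
    then have "(norm T)\<^sup>2 * eps < inner (T x) (A x)"
      using T0 TA[OF x] by simp
    moreover have "eps * norm T * norm A = (norm T)\<^sup>2 * eps"
      using nA by (simp add: power2_eq_square)
    ultimately show False
      using small abs_ge_self[of "inner (T x) (A x)"] by linarith
  qed
  ultimately show ?thesis by blast
qed

lemma exists_unit_orthogonal_in_subspace:
  fixes E :: "'a::real_inner set"
  assumes E: "subspace E" and inf_dim: "\<nexists>B. finite B \<and> E = span B"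
    and G: "finite G" "G \<subseteq> E"
  obtains u where "u \<in> E" "norm u = 1" "\<And>g. g \<in> G \<Longrightarrow> inner g u = 0"
proof -
  obtain F where F: "finite F" "orthonormal F" "span F = span G"
    using orthonormal_basis_of_span[OF G(1)] by blast
  have "span F \<subseteq> E" using F(3) span_minimal[OF G(2) E] by simp
  moreover have "span F \<noteq> E" using inf_dim F(1) by blast
  ultimately obtain v where v: "v \<in> E" "v \<notin> span F" by blast
  define u where "u = v - orth_proj F v"
  have "u \<in> E"
    using subspace_diff[OF E v(1)] orth_proj_in_span[of F v] \<open>span F \<subseteq> E\<close> by (auto simp: u_def)
  moreover have "u \<noteq> 0" using v(2) orth_proj_in_span[of F v] by (auto simp: u_def)
  moreover have "inner g u = 0" if "g \<in> G" for g
    using inner_diff_orth_proj_span[OF F(1,2), of g v] that F(3) span_superset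
    by (force simp: u_def inner_commute)
  ultimately show thesis
    using that[of "u /\<^sub>R norm u"] E by (simp add: subspace_scale)
qed

lemma exists_orthonormal_seq_in_subspace:
  fixes E :: "'a::real_inner set"
  assumes E: "subspace E" and inf_dim: "\<nexists>B. finite B \<and> E = span B"
  obtains e where "orthonormal_seq e" "\<And>n. e n \<in> E"
proof -
  define next_unit where
    "next_unit G = (SOME u. u \<in> E \<and> norm u = 1 \<and> (\<forall>g\<in>G. inner g u = 0))" for G
  have next_unit: "next_unit G \<in> E \<and> norm (next_unit G) = 1 \<and> (\<forall>g\<in>G. inner g (next_unit G) = 0)"
    if "finite G" "G \<subseteq> E" for G
    unfolding next_unit_def
    by (rule someI_ex) (metis exists_unit_orthogonal_in_subspace[OF E inf_dim that])
  define S where "S = rec_nat {} (\<lambda>_ G. insert (next_unit G) G)"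
  have S_Suc: "S (Suc n) = insert (next_unit (S n)) (S n)" for n
    by (simp add: S_def)
  have S: "finite (S n) \<and> S n \<subseteq> E" for n
    by (induction n) (simp_all add: S_def next_unit)
  define e where "e n = next_unit (S n)" for n
  have e: "e n \<in> E" "norm (e n) = 1" "\<forall>g\<in>S n. inner g (e n) = 0" for n
    using next_unit[of "S n"] S[of n] by (simp_all add: e_def)
  have earlier: "e m \<in> S n" if "m < n" for m n
    using that by (induction n) (auto simp: S_Suc e_def less_Suc_eq)
  have "orthonormal_seq e"
    unfolding orthonormal_seq_def
  proof (intro conjI allI impI)
    fix m n :: nat assume "m \<noteq> n"
    then show "inner (e m) (e n) = 0"
      using e(3) earlier by (metis inner_commute linorder_neqE_nat)
  qed (rule e(2))
  then show thesis using that e(1) by blast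
qed

lemma finitely_norm_attaining_if_bj_eps_orth_iff:
  fixes T :: "'a::{real_inner, complete_space} \<Rightarrow>\<^sub>L 'b::real_inner"
  assumes T0: "T \<noteq> 0" and eps: "0 \<le> eps" "eps < 1"
    and char: "\<And>A. bj_eps_orth eps T A \<longleftrightarrow> attain_eps_orth eps T A"
  shows "finitely_norm_attaining T"
proof -
  have "\<exists>B. finite B \<and> max_eigenspace T = span B"
  proof (rule ccontr)
    assume "\<not> ?thesis"
    then obtain e where "orthonormal_seq e" "\<And>n. e n \<in> max_eigenspace T"
      using exists_orthonormal_seq_in_subspace[OF subspace_max_eigenspace] by blast
    then show False
      using exists_bj_not_attain_eps_orth_if_orthonormal_seq[OF T0 eps] char by blast
  qed
  then obtain F where F: "finite F" "orthonormal F" "max_eigenspace T = span F"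
    by (metis orthonormal_basis_of_span)
  have MT: "norm_attain T = unit_sphere_of (span F)"
    using F(3) by (simp add: norm_attain_eq_unit_sphere_max_eigenspace)
  have "restr_norm T (orthogonal_comp (span F)) < norm T"
  proof (rule ccontr)
    assume "\<not> ?thesis"
    then show False
      using exists_bj_not_attain_eps_orth_if_restr_norm_ge[OF T0 eps F(1,2)] MT char
      by (force simp: unit_sphere_of_def)
  qed
  moreover have "fin_dim_subspace (span F)"
    using F(1) by (auto simp: fin_dim_subspace_def)
  ultimately show ?thesis
    using MT by (auto simp: finitely_norm_attaining_def)
qed

theorem mainTheorem3:
  fixes T :: "'a::{real_inner, complete_space} \<Rightarrow>\<^sub>L 'a" and eps :: real
  assumes "T \<noteq> 0" and "0 \<le> eps" and "eps < 1"
  shows "((\<forall>A :: 'a \<Rightarrow>\<^sub>L 'a. bj_eps_orth eps T A \<longleftrightarrow>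
             (\<exists>x \<in> norm_attain T. \<bar>inner (blinfun_apply T x) (blinfun_apply A x)\<bar> \<le> eps * norm T * norm A))
          \<longleftrightarrow>
          (\<exists>H0. fin_dim_subspace H0 \<and> norm_attain T = unit_sphere_of H0 \<and>
                restr_norm T (orthogonal_comp H0) < norm T))
       \<and>
       ((\<exists>H0. fin_dim_subspace H0 \<and> norm_attain T = unit_sphere_of H0 \<and>
                restr_norm T (orthogonal_comp H0) < norm T) \<longrightarrow>
          (\<forall>A :: 'a \<Rightarrow>\<^sub>L 'a. norm_attain T \<subseteq> norm_attain A \<longrightarrow>
             (bj_eps_orth eps T A \<longleftrightarrow>
              (\<exists>x \<in> norm_attain T. inner_eps_orth eps (blinfun_apply T x) (blinfun_apply A x)))))"
proof -
  have "(\<forall>A. bj_eps_orth eps T A \<longleftrightarrow> attain_eps_orth eps T A) \<longleftrightarrow> finitely_norm_attaining T"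
    using bj_eps_orth_iff_attain_eps_orth[OF assms(1,2)]
      finitely_norm_attaining_if_bj_eps_orth_iff[OF assms] by blast
  then show ?thesis
    using bj_eps_orth_iff_inner_eps_orth[OF assms(1,2)]
    unfolding attain_eps_orth_def finitely_norm_attaining_def by blast
qed

end
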